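(* Let $k\ge1$, $t\ge 2$, and let $Cat_{k,t-1}$ be a set of representatives of the $\sim_2$-equivalence classes of $[GL(k,2)]^{t-1}$. Let $\overline{S_t}$ be the set of codes generated by the matrices $(I_k\mid B)$ with $B\in Cat_{k,t-1}$. Then every code in $\overline{S_t}$ is a $t$-CIS $[tk,k]$ code, and every $t$-CIS $[tk,k]$ code is equivalent to some code in $\overline{S_t}$; hence, removing equivalent codes from $\overline{S_t}$ and keeping one representative of each equivalence class yields a set $S_t$ of representatives of all inequivalent $t$-CIS codes of dimension $k$.
   Context: A binary linear $[tk,k]$ code is $t$-CIS if its coordinate set can be partitioned into $t$ pairwise disjoint information sets, an information set being a set of $k$ coordinates whose columns in a generator matrix are linearly independent. Two codes are equivalent if one is obtained from the other by a permutation of coordinates. $[GL(k,2)]^{t-1}$ is the set of $k\times k(t-1)$ binary matrices $(A_1\mid\cdots\mid A_{t-1})$ with all $A_j\in GL(k,2)$. For $A,B\in[GL(k,2)]^{t-1}$, $A\sim_2B$ iff $A=P_kBP_{k(t-1)}$ for some $k\times k$ permutation matrix $P_k$ and some $k(t-1)\times k(t-1)$ permutation matrix $P_{k(t-1)}$. $I_k$ is the identity matrix. *)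

theory Defs
  imports "HOL-Library.Z2" "HOL-Combinatorics.Permutations" "Jordan_Normal_Form.Matrix"
begin

text \<open>Binary matrices are JNF matrices over the field bit = GF(2);
 coordinates / indices start at 0. A binary code of length n is a set of
 bit vectors of dimension n.\<close>

definition row_space :: "bit mat \<Rightarrow> bit vec set" where
  "row_space G = {vec (dim_col G) (\<lambda>j. \<Sum>i<dim_row G. a i * G $$ (i, j)) | a. True}"

definition rows_lin_indep :: "bit mat \<Rightarrow> bool" where
  "rows_lin_indep G \<longleftrightarrow> (\<forall>a :: nat \<Rightarrow> bit.
     (\<forall>j<dim_col G. (\<Sum>i<dim_row G. a i * G $$ (i, j)) = 0) \<longrightarrow> (\<forall>i<dim_row G. a i = 0))"

definition cols_lin_indep :: "bit mat \<Rightarrow> nat set \<Rightarrow> bool" where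
  "cols_lin_indep G I \<longleftrightarrow> (\<forall>a :: nat \<Rightarrow> bit.
     (\<forall>r<dim_row G. (\<Sum>j\<in>I. a j * G $$ (r, j)) = 0) \<longrightarrow> (\<forall>j\<in>I. a j = 0))"

definition generator_matrix :: "nat \<Rightarrow> nat \<Rightarrow> bit mat \<Rightarrow> bit vec set \<Rightarrow> bool" where
  "generator_matrix n k G C \<longleftrightarrow> G \<in> carrier_mat k n \<and> rows_lin_indep G \<and> C = row_space G"

definition linear_code :: "nat \<Rightarrow> nat \<Rightarrow> bit vec set \<Rightarrow> bool" where
  "linear_code n k C \<longleftrightarrow> (\<exists>G. generator_matrix n k G C)"

definition information_set :: "nat \<Rightarrow> nat \<Rightarrow> bit vec set \<Rightarrow> nat set \<Rightarrow> bool" where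
  "information_set n k C I \<longleftrightarrow> I \<subseteq> {..<n} \<and> card I = k \<and>
     (\<exists>G. generator_matrix n k G C \<and> cols_lin_indep G I)"

definition CIS_code :: "nat \<Rightarrow> nat \<Rightarrow> bit vec set \<Rightarrow> bool" where
  "CIS_code t k C \<longleftrightarrow> linear_code (t * k) k C \<and>
     (\<exists>Is :: nat \<Rightarrow> nat set.
        (\<forall>i<t. information_set (t * k) k C (Is i)) \<and>
        (\<forall>i<t. \<forall>j<t. i \<noteq> j \<longrightarrow> Is i \<inter> Is j = {}) \<and>
        (\<Union>i<t. Is i) = {..<t * k})"

definition permute_coords :: "nat \<Rightarrow> (nat \<Rightarrow> nat) \<Rightarrow> bit vec \<Rightarrow> bit vec" where
  "permute_coords n \<sigma> x = vec n (\<lambda>j. x $ \<sigma> j)"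

definition code_equiv :: "nat \<Rightarrow> bit vec set \<Rightarrow> bit vec set \<Rightarrow> bool" where
  "code_equiv n C D \<longleftrightarrow> (\<exists>\<sigma>. \<sigma> permutes {..<n} \<and> C = permute_coords n \<sigma> ` D)"

definition perm_mat :: "nat \<Rightarrow> (nat \<Rightarrow> nat) \<Rightarrow> bit mat" where
  "perm_mat n p = mat n n (\<lambda>(i, j). if p j = i then 1 else 0)"

definition is_perm_mat :: "nat \<Rightarrow> bit mat \<Rightarrow> bool" where
  "is_perm_mat n P \<longleftrightarrow> (\<exists>p. p permutes {..<n} \<and> P = perm_mat n p)"

definition block :: "nat \<Rightarrow> bit mat \<Rightarrow> nat \<Rightarrow> bit mat" where
  "block k A j = mat k k (\<lambda>(r, c). A $$ (r, j * k + c))"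

definition GL_pow :: "nat \<Rightarrow> nat \<Rightarrow> bit mat set" where
  "GL_pow k m = {A. A \<in> carrier_mat k (k * m) \<and> (\<forall>j<m. invertible_mat (block k A j))}"

definition sim2 :: "nat \<Rightarrow> nat \<Rightarrow> bit mat \<Rightarrow> bit mat \<Rightarrow> bool" where
  "sim2 k m A B \<longleftrightarrow> (\<exists>P Q. is_perm_mat k P \<and> is_perm_mat (k * m) Q \<and> A = P * B * Q)"

definition hcat :: "bit mat \<Rightarrow> bit mat \<Rightarrow> bit mat" where
  "hcat A B = mat (dim_row A) (dim_col A + dim_col B)
     (\<lambda>(i, j). if j < dim_col A then A $$ (i, j) else B $$ (i, j - dim_col A))"

end

theory Submission
  imports Defs "Jordan_Normal_Form.Determinant"
begin

text \<open>
  If every k \<times> k column block of a k \<times> tk generator matrix is invertible, the t blocks of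
  coordinates are pairwise disjoint information sets; this applies to (I_k | B) for B in
  [GL(k,2)]^(t-1). Conversely, a coordinate permutation moves the t disjoint information sets
  of a t-CIS code onto the t coordinate blocks, so that all blocks of a generator matrix become
  invertible, and multiplying by the inverse of the first block yields a generator matrix
  (I_k | B). Replacing B by P B Q only permutes coordinates: reorder the rows by the inverse of
  P, undo this on the identity block by the same column permutation, and apply Q to the
  remaining columns.
\<close>

text \<open>Keep GF(2) arithmetic in ring form, so that the generic lemmas about sums apply.\<close>
declare add_bit_eq_xor[simp del] mult_bit_eq_and[simp del]

lemma index_mult_mat_sum:
  assumes "(A :: 'a :: semiring_0 mat) \<in> carrier_mat n l" and "B \<in> carrier_mat l m"
    and "i < n" and "j < m"
  shows "(A * B) $$ (i, j) = (\<Sum>x<l. A $$ (i, x) * B $$ (x, j))"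
  using assms by (simp add: scalar_prod_def lessThan_atLeast0)

lemma invertible_matE:
  assumes "(M :: 'a :: semiring_1 mat) \<in> carrier_mat k k" and "invertible_mat M"
  obtains N where "N \<in> carrier_mat k k" "N * M = 1\<^sub>m k" "M * N = 1\<^sub>m k"
proof -
  from assms obtain N where MN: "M * N = 1\<^sub>m k" and NM: "N * M = 1\<^sub>m (dim_row N)"
    unfolding invertible_mat_def inverts_mat_def by auto
  have rows: "dim_row N = k" using arg_cong[OF NM, of dim_col] assms(1) by simp
  moreover have "dim_col N = k" using arg_cong[OF MN, of dim_col] by simp
  ultimately have "N \<in> carrier_mat k k" by (intro carrier_matI)
  from that[OF this _ MN] show ?thesis using NM rows by simp
qed

lemma invertible_mat_iff_det_neq_0:
  assumes M: "(M :: 'a :: field mat) \<in> carrier_mat k k"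
  shows "invertible_mat M \<longleftrightarrow> det M \<noteq> 0"
proof
  assume "invertible_mat M"
  with M obtain N where N: "N \<in> carrier_mat k k" and NM: "N * M = 1\<^sub>m k" and "M * N = 1\<^sub>m k"
    by (rule invertible_matE)
  have "det N * det M = 1" using det_mult[OF N M] by (simp add: NM)
  then show "det M \<noteq> 0" by auto
next
  assume "det M \<noteq> 0"
  from det_non_zero_imp_unit[OF M this, of "()"]
  obtain N where "N \<in> carrier_mat k k" "N * M = 1\<^sub>m k" "M * N = 1\<^sub>m k"
    unfolding Units_def ring_mat_def by auto
  then show "invertible_mat M"
    using M unfolding invertible_mat_def inverts_mat_def square_mat.simps
    by (metis carrier_matD(1,2))
qed

lemma invertible_mat_mult:
  assumes "(A :: 'a :: field mat) \<in> carrier_mat k k" "B \<in> carrier_mat k k"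
    and "invertible_mat A" "invertible_mat B"
  shows "invertible_mat (A * B)"
  using assms det_mult[of A k B] by (simp add: invertible_mat_iff_det_neq_0[of _ k])

lemma invertible_mat_one: "invertible_mat (1\<^sub>m k :: 'a :: field mat)"
  by (simp add: invertible_mat_iff_det_neq_0[of _ k])

lemma mult_mat_vec_index_sum:
  assumes "(M :: 'a :: comm_semiring_0 mat) \<in> carrier_mat k l" and "v \<in> carrier_vec l"
    and "r < k"
  shows "(M *\<^sub>v v) $ r = (\<Sum>c<l. v $ c * M $$ (r, c))"
  using assms by (simp add: scalar_prod_def lessThan_atLeast0 mult.commute)

lemma invertible_mat_iff_cols_lin_indep:
  assumes M: "M \<in> carrier_mat k k"
  shows "invertible_mat M \<longleftrightarrow> cols_lin_indep M {..<k}"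
proof -
  have dep_iff: "(\<exists>v. v \<in> carrier_vec k \<and> v \<noteq> 0\<^sub>v k \<and> M *\<^sub>v v = 0\<^sub>v k) \<longleftrightarrow>
      \<not> cols_lin_indep M {..<k}"
  proof
    assume "\<exists>v. v \<in> carrier_vec k \<and> v \<noteq> 0\<^sub>v k \<and> M *\<^sub>v v = 0\<^sub>v k"
    then obtain v where v: "v \<in> carrier_vec k" "v \<noteq> 0\<^sub>v k" "M *\<^sub>v v = 0\<^sub>v k" by blast
    show "\<not> cols_lin_indep M {..<k}"
    proof
      assume indep: "cols_lin_indep M {..<k}"
      have "\<forall>r<k. (\<Sum>c<k. v $ c * M $$ (r, c)) = 0"
        using v(3) mult_mat_vec_index_sum[OF M v(1)] by (metis index_zero_vec(1))
      then have "\<forall>c<k. v $ c = 0"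
        using indep M unfolding cols_lin_indep_def by auto
      then have "v = 0\<^sub>v k" using v(1) by (intro eq_vecI) auto
      with v(2) show False ..
    qed
  next
    assume "\<not> cols_lin_indep M {..<k}"
    then obtain a c where a: "\<forall>r<k. (\<Sum>c<k. a c * M $$ (r, c)) = 0" and "c < k" "a c \<noteq> 0"
      using M unfolding cols_lin_indep_def by auto
    then have "vec k a $ c \<noteq> 0\<^sub>v k $ c" by simp
    then have "vec k a \<noteq> 0\<^sub>v k" by metis
    moreover have "M *\<^sub>v vec k a = 0\<^sub>v k"
      using M a
      by (intro eq_vecI) (auto simp: mult_mat_vec_index_sum[OF M] simp del: index_mult_mat_vec)
    ultimately show "\<exists>v. v \<in> carrier_vec k \<and> v \<noteq> 0\<^sub>v k \<and> M *\<^sub>v v = 0\<^sub>v k"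
      by (intro exI[of _ "vec k a"]) simp
  qed
  show ?thesis
    unfolding invertible_mat_iff_det_neq_0[OF M] det_0_iff_vec_prod_zero_field[OF M] dep_iff by simp
qed

lemma row_space_carrier: "row_space G \<subseteq> carrier_vec (dim_col G)"
  unfolding row_space_def by auto

lemma row_in_row_space:
  assumes "r < dim_row G"
  shows "vec (dim_col G) (\<lambda>j. G $$ (r, j)) \<in> row_space G"
proof -
  have "(\<Sum>i<dim_row G. (if i = r then 1 else 0) * G $$ (i, j))
      = (\<Sum>i<dim_row G. if i = r then G $$ (i, j) else 0)" for j
    by (intro sum.cong) auto
  then have "(\<Sum>i<dim_row G. (if i = r then 1 else 0) * G $$ (i, j)) = G $$ (r, j)" for j
    using assms by simp
  then show ?thesis
    unfolding row_space_def by (intro CollectI exI[of _ "\<lambda>i. if i = r then 1 else 0"]) simp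
qed

lemma row_space_mult_subset:
  assumes M: "M \<in> carrier_mat l k" and G: "G \<in> carrier_mat k n"
  shows "row_space (M * G) \<subseteq> row_space G"
proof
  fix v assume "v \<in> row_space (M * G)"
  then obtain a where v: "v = vec n (\<lambda>j. \<Sum>i<l. a i * (M * G) $$ (i, j))"
    unfolding row_space_def using M G by auto
  define b where "b = (\<lambda>x. \<Sum>i<l. a i * M $$ (i, x))"
  have "(\<Sum>i<l. a i * (M * G) $$ (i, j)) = (\<Sum>x<k. b x * G $$ (x, j))" if "j < n" for j
  proof -
    have "(\<Sum>i<l. a i * (M * G) $$ (i, j)) = (\<Sum>i<l. \<Sum>x<k. a i * M $$ (i, x) * G $$ (x, j))"
      using index_mult_mat_sum[OF M G _ that]
      by (simp add: sum_distrib_left mult.assoc)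
    also have "\<dots> = (\<Sum>x<k. b x * G $$ (x, j))"
      unfolding b_def by (subst sum.swap) (simp add: sum_distrib_right)
    finally show ?thesis .
  qed
  then have "v = vec n (\<lambda>j. \<Sum>x<k. b x * G $$ (x, j))"
    unfolding v by (intro eq_vecI) auto
  then show "v \<in> row_space G" unfolding row_space_def using G by auto
qed

lemma row_space_mult_invertible:
  assumes M: "M \<in> carrier_mat k k" and "invertible_mat M" and G: "G \<in> carrier_mat k n"
  shows "row_space (M * G) = row_space G"
proof
  show "row_space (M * G) \<subseteq> row_space G" by (rule row_space_mult_subset[OF M G])
  from M \<open>invertible_mat M\<close> obtain N where N: "N \<in> carrier_mat k k" "N * M = 1\<^sub>m k"
    by (rule invertible_matE)
  have "G = N * (M * G)" using N M G by (simp flip: assoc_mult_mat)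
  also have "row_space \<dots> \<subseteq> row_space (M * G)"
    using N M G by (intro row_space_mult_subset) auto
  finally show "row_space G \<subseteq> row_space (M * G)" .
qed

text \<open>Column dependencies are inherited by every matrix whose rows lie in the row space.\<close>
lemma cols_lin_indep_row_space_mono:
  assumes G: "G \<in> carrier_mat k n" and G': "G' \<in> carrier_mat l n"
    and sub: "row_space G' \<subseteq> row_space G" and I: "I \<subseteq> {..<n}"
    and indep: "cols_lin_indep G' I"
  shows "cols_lin_indep G I"
  unfolding cols_lin_indep_def
proof (intro allI impI)
  fix a :: "nat \<Rightarrow> bit" assume dep: "\<forall>r<dim_row G. (\<Sum>j\<in>I. a j * G $$ (r, j)) = 0"
  have "(\<Sum>j\<in>I. a j * G' $$ (r, j)) = 0" if r: "r < l" for r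
  proof -
    have "vec n (\<lambda>j. G' $$ (r, j)) \<in> row_space G"
      using row_in_row_space[of r G'] r G' sub by auto
    then obtain b where b: "vec n (\<lambda>j. G' $$ (r, j)) = vec n (\<lambda>j. \<Sum>i<k. b i * G $$ (i, j))"
      unfolding row_space_def using G by auto
    have "G' $$ (r, j) = (\<Sum>i<k. b i * G $$ (i, j))" if "j \<in> I" for j
      using arg_cong[OF b, of "\<lambda>v. v $ j"] that I by auto
    then have "(\<Sum>j\<in>I. a j * G' $$ (r, j)) = (\<Sum>j\<in>I. \<Sum>i<k. b i * (a j * G $$ (i, j)))"
      by (simp add: sum_distrib_left mult.left_commute)
    also have "\<dots> = (\<Sum>i<k. b i * (\<Sum>j\<in>I. a j * G $$ (i, j)))"
      by (subst sum.swap) (simp add: sum_distrib_left)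
    also have "\<dots> = 0" using dep G by simp
    finally show ?thesis .
  qed
  then show "\<forall>j\<in>I. a j = 0" using indep G' unfolding cols_lin_indep_def by auto
qed

definition reindex_cols :: "'a mat \<Rightarrow> nat \<Rightarrow> (nat \<Rightarrow> nat) \<Rightarrow> 'a mat" where
  "reindex_cols G m h = mat (dim_row G) m (\<lambda>(r, c). G $$ (r, h c))"

lemma cols_lin_indep_reindex_cols:
  assumes h: "bij_betw h {..<m} I"
  shows "cols_lin_indep (reindex_cols G m h) {..<m} \<longleftrightarrow> cols_lin_indep G I"
proof -
  have sum_eq: "(\<Sum>j\<in>I. a j * G $$ (r, j)) = (\<Sum>c<m. a (h c) * reindex_cols G m h $$ (r, c))"
    if "r < dim_row G" for a r
    using sum.reindex_bij_betw[OF h, of "\<lambda>j. a j * G $$ (r, j)"] that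
    by (simp add: reindex_cols_def)
  show ?thesis
  proof
    assume indep: "cols_lin_indep (reindex_cols G m h) {..<m}"
    show "cols_lin_indep G I" unfolding cols_lin_indep_def
    proof (intro allI impI ballI)
      fix a j assume dep: "\<forall>r<dim_row G. (\<Sum>j\<in>I. a j * G $$ (r, j)) = 0" and "j \<in> I"
      then obtain c where c: "c < m" "j = h c" using h by (auto simp: bij_betw_def)
      have "\<forall>c<m. a (h c) = 0"
        using indep[unfolded cols_lin_indep_def, rule_format, of "a \<circ> h"] dep sum_eq
        by (simp add: reindex_cols_def)
      with c show "a j = 0" by simp
    qed
  next
    assume indep: "cols_lin_indep G I"
    show "cols_lin_indep (reindex_cols G m h) {..<m}" unfolding cols_lin_indep_def
    proof (intro allI impI ballI)
      fix b c
      assume dep: "\<forall>r<dim_row (reindex_cols G m h).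
          (\<Sum>c\<in>{..<m}. b c * reindex_cols G m h $$ (r, c)) = 0" and c: "c \<in> {..<m}"
      define a where "a = b \<circ> inv_into {..<m} h"
      have ab: "a (h c) = b c" if "c < m" for c
        using h that by (simp add: a_def bij_betw_def)
      have "(\<Sum>j\<in>I. a j * G $$ (r, j)) = 0" if "r < dim_row G" for r
        using dep sum_eq[OF that, of a] ab that by (simp add: reindex_cols_def)
      then have "a (h c) = 0" using indep h c unfolding cols_lin_indep_def bij_betw_def by auto
      with ab c show "b c = 0" by simp
    qed
  qed
qed

lemma permutes_lessThan: "\<sigma> permutes {..<n} \<Longrightarrow> i < n \<Longrightarrow> \<sigma> i < n"
  using permutes_in_image[of \<sigma> "{..<n}" i] by simp

lemma permute_coords_vec:
  "\<sigma> permutes {..<n} \<Longrightarrow> permute_coords n \<sigma> (vec n g) = vec n (\<lambda>x. g (\<sigma> x))"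
  unfolding permute_coords_def by (intro eq_vecI) (auto simp: permutes_lessThan)

lemma row_space_permuted:
  assumes G: "G \<in> carrier_mat k n" and H: "H \<in> carrier_mat k n"
    and perm_rows: "\<pi> permutes {..<k}" and perm_cols: "\<tau> permutes {..<n}"
    and entries: "\<And>i x. i < k \<Longrightarrow> x < n \<Longrightarrow> H $$ (i, x) = G $$ (\<pi> i, \<tau> x)"
  shows "row_space H = permute_coords n \<tau> ` row_space G"
proof -
  have combination: "vec n (\<lambda>j. \<Sum>i<k. b (\<pi> i) * H $$ (i, j))
      = permute_coords n \<tau> (vec n (\<lambda>j. \<Sum>i<k. b i * G $$ (i, j)))" for b
  proof -
    have "(\<Sum>i<k. b (\<pi> i) * H $$ (i, x)) = (\<Sum>i<k. b i * G $$ (i, \<tau> x))" if "x < n" for x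
    proof -
      have "(\<Sum>i<k. b (\<pi> i) * H $$ (i, x)) = (\<Sum>i<k. b (\<pi> i) * G $$ (\<pi> i, \<tau> x))"
        using entries that by simp
      also have "\<dots> = (\<Sum>i<k. b i * G $$ (i, \<tau> x))"
        using sum.reindex_bij_betw[OF permutes_imp_bij[OF perm_rows]] by simp
      finally show ?thesis .
    qed
    then show ?thesis unfolding permute_coords_vec[OF perm_cols] by (intro eq_vecI) auto
  qed
  have "\<exists>b. vec n (\<lambda>j. \<Sum>i<k. a i * H $$ (i, j))
      = vec n (\<lambda>j. \<Sum>i<k. b (\<pi> i) * H $$ (i, j))" for a
    by (intro exI[of _ "a \<circ> inv_into UNIV \<pi>"]) (simp add: permutes_inverses(2)[OF perm_rows])
  then have "row_space H = {vec n (\<lambda>j. \<Sum>i<k. b (\<pi> i) * H $$ (i, j)) | b. True}"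
    unfolding row_space_def carrier_matD[OF H]
  proof (intro equalityI subsetI)
    fix v assume "v \<in> {vec n (\<lambda>j. \<Sum>i<k. b (\<pi> i) * H $$ (i, j)) | b. True}"
    then obtain b where "v = vec n (\<lambda>j. \<Sum>i<k. b (\<pi> i) * H $$ (i, j))" by auto
    then show "v \<in> {vec n (\<lambda>j. \<Sum>i<k. a i * H $$ (i, j)) | a. True}"
      by (intro CollectI exI[of _ "\<lambda>i. b (\<pi> i)"]) simp
  qed blast
  also have "\<dots> = permute_coords n \<tau> ` row_space G"
    unfolding combination row_space_def using G by auto
  finally show ?thesis .
qed

lemma block_carrier: "block k A j \<in> carrier_mat k k"
  unfolding block_def by simp

lemma block_eq_reindex_cols:
  assumes "dim_row A = k"
  shows "block k A j = reindex_cols A k (\<lambda>c. j * k + c)"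
  using assms unfolding block_def reindex_cols_def by auto

lemma block_reindex_cols:
  assumes "dim_row G = k" and "j * k + k \<le> m"
  shows "block k (reindex_cols G m h) j = reindex_cols G k (\<lambda>c. h (j * k + c))"
  using assms unfolding block_def reindex_cols_def by (intro eq_matI) auto

lemma block_mult:
  assumes M: "M \<in> carrier_mat k k" and G: "G \<in> carrier_mat k n" and "j * k + k \<le> n"
  shows "block k (M * G) j = M * block k G j"
proof (rule eq_matI)
  fix r c assume "r < dim_row (M * block k G j)" "c < dim_col (M * block k G j)"
  then have rc: "r < k" "c < k" using M by (auto simp: block_def)
  then have "block k (M * G) j $$ (r, c) = (\<Sum>x<k. M $$ (r, x) * G $$ (x, j * k + c))"
    using assms by (simp add: block_def index_mult_mat_sum[OF M G] del: index_mult_mat)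
  also have "\<dots> = (M * block k G j) $$ (r, c)"
    unfolding index_mult_mat_sum[OF M block_carrier rc] using rc by (simp add: block_def)
  finally show "block k (M * G) j $$ (r, c) = (M * block k G j) $$ (r, c)" .
qed (use M in \<open>auto simp: block_def\<close>)

lemma cols_lin_indep_interval_iff_invertible_block:
  assumes "dim_row G = k"
  shows "cols_lin_indep G {j * k..<j * k + k} \<longleftrightarrow> invertible_mat (block k G j)"
proof -
  have "(\<lambda>c. c + j * k) ` {0..<k} = {j * k..<j * k + k}"
    by (simp add: add.commute)
  then have bij: "bij_betw (\<lambda>c. j * k + c) {..<k} {j * k..<j * k + k}"
    by (simp add: bij_betw_def lessThan_atLeast0 add.commute)
  have "invertible_mat (block k G j) \<longleftrightarrow> cols_lin_indep (block k G j) {..<k}"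
    by (rule invertible_mat_iff_cols_lin_indep[OF block_carrier])
  also have "\<dots> \<longleftrightarrow> cols_lin_indep (reindex_cols G k (\<lambda>c. j * k + c)) {..<k}"
    unfolding block_eq_reindex_cols[OF assms] ..
  also have "\<dots> \<longleftrightarrow> cols_lin_indep G {j * k..<j * k + k}"
    by (rule cols_lin_indep_reindex_cols[OF bij])
  finally show ?thesis by blast
qed

lemma mem_interval_iff_div: "x \<in> {j * k..<j * k + k} \<longleftrightarrow> 0 < k \<and> x div k = (j :: nat)"
proof (cases "k = 0")
  case False
  have "x div k = j" if "j * k \<le> x" "x < j * k + k"
    using that by (intro div_nat_eqI) (simp_all add: mult.commute)
  moreover have "x div k * k \<le> x \<and> x < x div k * k + k"
    using div_mult_mod_eq[of x k] mod_less_divisor[of k x] False by linarith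
  ultimately show ?thesis using False by auto
qed simp

lemma block_end_le: "j < t \<Longrightarrow> j * k + k \<le> t * (k :: nat)"
  using mult_le_mono1[of "Suc j" t k] by simp

lemma intervals_disjoint:
  fixes i j k :: nat
  assumes "i \<noteq> j"
  shows "{i * k..<i * k + k} \<inter> {j * k..<j * k + k} = {}"
proof -
  consider "Suc i \<le> j" | "Suc j \<le> i" using assms by linarith
  then have "Suc i * k \<le> j * k \<or> Suc j * k \<le> i * k"
    by cases (simp_all only: mult_le_mono1 simp_thms)
  then show ?thesis by auto
qed

lemma UN_intervals: "(\<Union>j<t. {j * k..<j * k + k}) = {..<t * k :: nat}"
proof (intro equalityI subsetI)
  fix x assume "x \<in> (\<Union>j<t. {j * k..<j * k + k})"
  then obtain j where "j < t" "x < j * k + k" by auto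
  with block_end_le[of j t k] show "x \<in> {..<t * k}" by simp
next
  fix x assume "x \<in> {..<t * k}"
  then have "0 < k" by (cases k) auto
  moreover have "x div k < t"
    using \<open>0 < k\<close> \<open>x \<in> {..<t * k}\<close> by (simp add: div_less_iff_less_mult)
  moreover have "x \<in> {x div k * k..<x div k * k + k}"
    using \<open>0 < k\<close> by (subst mem_interval_iff_div) simp
  ultimately show "x \<in> (\<Union>j<t. {j * k..<j * k + k})" by blast
qed

lemma hcat_carrier:
  "A \<in> carrier_mat k a \<Longrightarrow> B \<in> carrier_mat k b \<Longrightarrow> hcat A B \<in> carrier_mat k (a + b)"
  unfolding hcat_def by auto

lemma index_hcat:
  "i < dim_row A \<Longrightarrow> x < dim_col A + dim_col B \<Longrightarrow>
   hcat A B $$ (i, x) = (if x < dim_col A then A $$ (i, x) else B $$ (i, x - dim_col A))"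
  unfolding hcat_def by simp

lemma block_hcat_0: "A \<in> carrier_mat k k \<Longrightarrow> block k (hcat A B) 0 = A"
  unfolding block_def hcat_def by (intro eq_matI) auto

lemma block_hcat_Suc:
  assumes "A \<in> carrier_mat k k" and "j * k + k \<le> dim_col B"
  shows "block k (hcat A B) (Suc j) = block k B j"
  using assms unfolding block_def hcat_def by (intro eq_matI) auto

lemma hcat_block_0_tail:
  assumes "G \<in> carrier_mat k (k + m)"
  shows "hcat (block k G 0) (reindex_cols G m ((+) k)) = G"
  using assms unfolding block_def hcat_def reindex_cols_def by (intro eq_matI) auto

lemma rows_lin_indep_hcat_one: "rows_lin_indep (hcat (1\<^sub>m k) B)"
  unfolding rows_lin_indep_def
proof (intro allI impI)
  fix a :: "nat \<Rightarrow> bit" and i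
  assume dep: "\<forall>j<dim_col (hcat (1\<^sub>m k) B).
      (\<Sum>r<dim_row (hcat (1\<^sub>m k) B). a r * hcat (1\<^sub>m k) B $$ (r, j)) = 0"
    and i: "i < dim_row (hcat (1\<^sub>m k) B)"
  then have "i < k" by (simp add: hcat_def)
  have "(\<Sum>r<k. a r * hcat (1\<^sub>m k) B $$ (r, i)) = (\<Sum>r<k. if r = i then a r else 0)"
    using \<open>i < k\<close> by (intro sum.cong) (auto simp: hcat_def)
  also have "\<dots> = a i" using \<open>i < k\<close> by simp
  finally show "a i = 0"
    using dep[rule_format, of i] \<open>i < k\<close> unfolding hcat_def by simp
qed

lemma CIS_code_row_space:
  assumes G: "G \<in> carrier_mat k (t * k)" and rows: "rows_lin_indep G"
    and blocks: "\<And>j. j < t \<Longrightarrow> invertible_mat (block k G j)"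
  shows "CIS_code t k (row_space G)"
proof -
  have gen: "generator_matrix (t * k) k G (row_space G)"
    unfolding generator_matrix_def using G rows by simp
  have info: "information_set (t * k) k (row_space G) {j * k..<j * k + k}" if "j < t" for j
    unfolding information_set_def
  proof (intro conjI exI[of _ G])
    show "{j * k..<j * k + k} \<subseteq> {..<t * k}"
      unfolding UN_intervals[symmetric] using that by (intro UN_upper) simp
    show "cols_lin_indep G {j * k..<j * k + k}"
      using cols_lin_indep_interval_iff_invertible_block[OF carrier_matD(1)[OF G]] blocks[OF that]
      by simp
  qed (use gen in simp_all)
  show ?thesis
    unfolding CIS_code_def
  proof (intro conjI exI[of _ "\<lambda>j. {j * k..<j * k + k}"])
    show "linear_code (t * k) k (row_space G)" unfolding linear_code_def using gen by blast
    show "\<forall>i<t. \<forall>j<t. i \<noteq> j \<longrightarrow> {i * k..<i * k + k} \<inter> {j * k..<j * k + k} = {}"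
      by (intro allI impI) (rule intervals_disjoint)
  qed (use info UN_intervals in simp_all)
qed

lemma CIS_code_systematic:
  assumes "1 \<le> t" and B: "B \<in> GL_pow k (t - 1)"
  shows "CIS_code t k (row_space (hcat (1\<^sub>m k) B))"
proof (rule CIS_code_row_space)
  have "B \<in> carrier_mat k (k * (t - 1))" using B by (simp add: GL_pow_def)
  from hcat_carrier[OF one_carrier_mat this] show "hcat (1\<^sub>m k) B \<in> carrier_mat k (t * k)"
    using assms(1) by (cases t) auto
  show "rows_lin_indep (hcat (1\<^sub>m k) B)" by (rule rows_lin_indep_hcat_one)
next
  fix j assume "j < t"
  show "invertible_mat (block k (hcat (1\<^sub>m k) B) j)"
  proof (cases j)
    case 0
    then show ?thesis by (simp add: block_hcat_0 invertible_mat_one)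
  next
    case (Suc i)
    then have "i < t - 1" using \<open>j < t\<close> by simp
    then have "k * Suc i \<le> k * (t - 1)" by (intro mult_le_mono2) simp
    moreover have "dim_col B = k * (t - 1)" using B unfolding GL_pow_def by auto
    ultimately have "i * k + k \<le> dim_col B" by (simp add: mult.commute)
    then have "block k (hcat (1\<^sub>m k) B) j = block k B i"
      unfolding Suc by (rule block_hcat_Suc[OF one_carrier_mat])
    moreover have "invertible_mat (block k B i)"
      using B \<open>i < t - 1\<close> unfolding GL_pow_def by blast
    ultimately show ?thesis by simp
  qed
qed

lemma permute_coords_comp:
  "\<sigma> permutes {..<n} \<Longrightarrow> permute_coords n \<sigma> (permute_coords n \<tau> x) = permute_coords n (\<tau> \<circ> \<sigma>) x"
  unfolding permute_coords_def by (intro eq_vecI) (auto simp: permutes_lessThan)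

lemma permute_coords_id: "x \<in> carrier_vec n \<Longrightarrow> permute_coords n id x = x"
  unfolding permute_coords_def by (intro eq_vecI) auto

lemma code_equiv_refl: "C \<subseteq> carrier_vec n \<Longrightarrow> code_equiv n C C"
  unfolding code_equiv_def
  by (intro exI[of _ id]) (auto simp: permute_coords_id image_iff subset_iff intro!: bexI)

lemma code_equiv_sym:
  assumes "code_equiv n C D" and D: "D \<subseteq> carrier_vec n"
  shows "code_equiv n D C"
proof -
  obtain \<sigma> where \<sigma>: "\<sigma> permutes {..<n}" and C: "C = permute_coords n \<sigma> ` D"
    using assms(1) unfolding code_equiv_def by blast
  define \<rho> where "\<rho> = inv_into UNIV \<sigma>"
  have \<rho>: "\<rho> permutes {..<n}" unfolding \<rho>_def by (rule permutes_inv[OF \<sigma>])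
  have "\<sigma> \<circ> \<rho> = id" unfolding \<rho>_def by (rule permutes_inv_o(1)[OF \<sigma>])
  then have "permute_coords n \<rho> (permute_coords n \<sigma> x) = x" if "x \<in> D" for x
    using that D by (simp add: permute_coords_comp[OF \<rho>] permute_coords_id subset_iff)
  then have "D = permute_coords n \<rho> ` C" unfolding C image_image by simp
  with \<rho> show ?thesis unfolding code_equiv_def by blast
qed

lemma code_equiv_trans:
  assumes "code_equiv n C D" and "code_equiv n D E"
  shows "code_equiv n C E"
proof -
  obtain \<sigma> \<tau> where \<sigma>: "\<sigma> permutes {..<n}" "C = permute_coords n \<sigma> ` D"
    and \<tau>: "\<tau> permutes {..<n}" "D = permute_coords n \<tau> ` E"
    using assms unfolding code_equiv_def by blast
  have "C = permute_coords n (\<tau> \<circ> \<sigma>) ` E"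
    unfolding \<sigma>(2) \<tau>(2) image_image permute_coords_comp[OF \<sigma>(1)] ..
  moreover have "\<tau> \<circ> \<sigma> permutes {..<n}" using \<sigma>(1) \<tau>(1) by (rule permutes_compose)
  ultimately show ?thesis unfolding code_equiv_def by blast
qed

lemma index_perm_mat_mult:
  assumes p: "p permutes {..<k}" and X: "X \<in> carrier_mat k m" and "i < k" and "j < m"
  shows "(perm_mat k p * X) $$ (i, j) = X $$ (inv_into UNIV p i, j)"
proof -
  have "(perm_mat k p * X) $$ (i, j) = (\<Sum>l<k. if l = inv_into UNIV p i then X $$ (l, j) else 0)"
    using assms permutes_inv_eq[OF p]
    by (intro trans[OF index_mult_mat_sum[of _ k k X m]] sum.cong) (auto simp: perm_mat_def)
  also have "\<dots> = X $$ (inv_into UNIV p i, j)"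
    using permutes_lessThan[OF permutes_inv[OF p] \<open>i < k\<close>] by simp
  finally show ?thesis .
qed

lemma index_mult_perm_mat:
  assumes q: "q permutes {..<m}" and X: "X \<in> carrier_mat k m" and "i < k" and "j < m"
  shows "(X * perm_mat m q) $$ (i, j) = X $$ (i, q j)"
proof -
  have "(X * perm_mat m q) $$ (i, j) = (\<Sum>l<m. if l = q j then X $$ (i, l) else 0)"
    using assms
    by (intro trans[OF index_mult_mat_sum[of X k m _ m]] sum.cong) (auto simp: perm_mat_def)
  also have "\<dots> = X $$ (i, q j)" using permutes_lessThan[OF q \<open>j < m\<close>] by simp
  finally show ?thesis .
qed

lemma code_equiv_hcat_one_perm_mats:
  assumes B: "B \<in> carrier_mat k m" and P: "is_perm_mat k P" and Q: "is_perm_mat m Q"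
  shows "code_equiv (k + m) (row_space (hcat (1\<^sub>m k) (P * B * Q))) (row_space (hcat (1\<^sub>m k) B))"
proof -
  obtain p q where p: "p permutes {..<k}" and P: "P = perm_mat k p"
    and q: "q permutes {..<m}" and Q: "Q = perm_mat m q"
    using P Q unfolding is_perm_mat_def by blast
  define \<rho> where "\<rho> = inv_into UNIV p"
  have \<rho>: "\<rho> permutes {..<k}" unfolding \<rho>_def by (rule permutes_inv[OF p])
  have PB: "P * B \<in> carrier_mat k m"
    unfolding P by (rule mult_carrier_mat[OF _ B]) (simp add: perm_mat_def)
  have PBQ: "P * B * Q \<in> carrier_mat k m"
    unfolding Q by (rule mult_carrier_mat[OF PB]) (simp add: perm_mat_def)
  have entries: "(P * B * Q) $$ (i, j) = B $$ (\<rho> i, q j)" if "i < k" "j < m" for i j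
  proof -
    have "(P * B * Q) $$ (i, j) = (P * B) $$ (i, q j)"
      unfolding Q by (rule index_mult_perm_mat[OF q PB that])
    also have "\<dots> = B $$ (\<rho> i, q j)"
      unfolding P \<rho>_def using that permutes_lessThan[OF q]
      by (intro index_perm_mat_mult[OF p B]) auto
    finally show ?thesis .
  qed
  define shift where "shift = map_permutation {..<m} ((+) k) q"
  have "bij_betw ((+) k) {..<m} {k..<k + m}"
    using image_add_atLeastLessThan[of k 0 m] by (simp add: lessThan_atLeast0 add.commute)
  then have "shift permutes {k..<k + m}"
    unfolding shift_def by (rule map_permutation_permutes[OF _ q])
  then have shift: "shift permutes {..<k + m}" by (rule permutes_subset) auto
  have shift_low: "shift x = x" if "x < k" for x
    using permutes_not_in[OF \<open>shift permutes {k..<k + m}\<close>] that by simp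
  have shift_high: "shift (k + c) = k + q c" if "c < m" for c
    unfolding shift_def using that by (intro map_permutation_apply) auto
  define \<tau> where "\<tau> = \<rho> \<circ> shift"
  have \<tau>: "\<tau> permutes {..<k + m}"
    unfolding \<tau>_def by (rule permutes_compose[OF shift permutes_subset[OF \<rho>]]) auto
  have "row_space (hcat (1\<^sub>m k) (P * B * Q))
      = permute_coords (k + m) \<tau> ` row_space (hcat (1\<^sub>m k) B)"
  proof (rule row_space_permuted[OF hcat_carrier[OF one_carrier_mat B]
        hcat_carrier[OF one_carrier_mat PBQ] \<rho> \<tau>])
    fix i x assume i: "i < k" and x: "x < k + m"
    show "hcat (1\<^sub>m k) (P * B * Q) $$ (i, x) = hcat (1\<^sub>m k) B $$ (\<rho> i, \<tau> x)"
    proof (cases "x < k")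
      case True
      then have "\<tau> x = \<rho> x" unfolding \<tau>_def by (simp add: shift_low)
      then show ?thesis
        using i x True permutes_lessThan[OF \<rho> i] permutes_lessThan[OF \<rho> True]
          carrier_matD[OF B] carrier_matD[OF PBQ]
        by (simp add: index_hcat inj_eq[OF permutes_inj[OF \<rho>]])
    next
      case False
      then obtain c where c: "x = k + c" "c < m"
        using x by (metis add_diff_inverse_nat add_less_cancel_left)
      have "\<tau> x = k + q c"
        using c shift_high permutes_not_in[OF \<rho>] unfolding \<tau>_def by simp
      then show ?thesis
        using i c permutes_lessThan[OF \<rho> i] permutes_lessThan[OF q c(2)] entries
          carrier_matD[OF B] carrier_matD[OF PBQ]
        by (simp add: index_hcat)
    qed
  qed
  with \<tau> show ?thesis unfolding code_equiv_def by blast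
qed

lemma permutation_onto_partition:
  fixes Is :: "nat \<Rightarrow> nat set"
  assumes disj: "\<And>i j. i < t \<Longrightarrow> j < t \<Longrightarrow> i \<noteq> j \<Longrightarrow> Is i \<inter> Is j = {}"
    and cover: "(\<Union>j<t. Is j) = {..<t * k}"
    and card: "\<And>j. j < t \<Longrightarrow> card (Is j) = k"
  obtains \<sigma> where "\<sigma> permutes {..<t * k}"
    and "\<And>j. j < t \<Longrightarrow> bij_betw (\<lambda>c. \<sigma> (j * k + c)) {..<k} (Is j)"
proof -
  have "\<forall>j\<in>{..<t}. \<exists>f. bij_betw f {..<k} (Is j)"
  proof
    fix j assume "j \<in> {..<t}"
    then have "Is j \<subseteq> {..<t * k}" using cover by blast
    then have "finite (Is j)" by (rule finite_subset) simp
    with card \<open>j \<in> {..<t}\<close> show "\<exists>f. bij_betw f {..<k} (Is j)"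
      using ex_bij_betw_nat_finite[of "Is j"] by (simp add: lessThan_atLeast0)
  qed
  from bchoice[OF this] obtain f where f_all: "\<forall>j\<in>{..<t}. bij_betw (f j) {..<k} (Is j)"
    by blast
  have f: "bij_betw (f j) {..<k} (Is j)" if "j < t" for j using f_all that by simp
  define \<sigma> where "\<sigma> x = (if x < t * k then f (x div k) (x mod k) else x)" for x
  have pos: "0 < k" and div: "x div k < t" if "x < t * k" for x
    using that by (cases k; simp add: div_less_iff_less_mult)+
  have in_part: "\<sigma> x \<in> Is (x div k)" if "x < t * k" for x
    using f[OF div[OF that]] mod_less_divisor[OF pos[OF that]] that
    unfolding \<sigma>_def bij_betw_def by auto
  have "\<sigma> permutes {..<t * k}"
  proof (rule inj_imp_permutes)
    show "inj_on \<sigma> {..<t * k}"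
    proof (rule inj_onI)
      fix x y assume x: "x \<in> {..<t * k}" and y: "y \<in> {..<t * k}" and eq: "\<sigma> x = \<sigma> y"
      have "\<sigma> x \<in> Is (x div k) \<inter> Is (y div k)"
        using in_part[of x] in_part[of y] x y unfolding eq by simp
      then have same_div: "x div k = y div k" using disj div x y by blast
      then have "f (x div k) (x mod k) = f (x div k) (y mod k)" using eq x y unfolding \<sigma>_def by simp
      then have "x mod k = y mod k"
        using f[OF div] x pos unfolding bij_betw_def inj_on_def by auto
      with same_div show "x = y" by (metis div_mult_mod_eq)
    qed
    show "\<sigma> x \<in> {..<t * k}" if "x \<in> {..<t * k}" for x
      using in_part[of x] div[of x] that cover by blast
  qed (auto simp: \<sigma>_def)
  moreover have "bij_betw (\<lambda>c. \<sigma> (j * k + c)) {..<k} (Is j)" if "j < t" for j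
  proof (rule bij_betw_cong[THEN iffD1, OF _ f[OF that]])
    fix c assume "c \<in> {..<k}"
    then have "j * k + c < t * k" using block_end_le[OF that, of k] by simp
    with \<open>c \<in> {..<k}\<close> show "f j c = \<sigma> (j * k + c)" unfolding \<sigma>_def by simp
  qed
  ultimately show ?thesis by (rule that)
qed

lemma systematic_generator_matrix:
  assumes G: "G \<in> carrier_mat k (t * k)" and "1 \<le> t"
    and blocks: "\<And>j. j < t \<Longrightarrow> invertible_mat (block k G j)"
  obtains B where "B \<in> GL_pow k (t - 1)" and "row_space G = row_space (hcat (1\<^sub>m k) B)"
proof -
  define m where "m = k * (t - 1)"
  have tk: "t * k = k + m" unfolding m_def using \<open>1 \<le> t\<close> by (cases t) auto
  have "invertible_mat (block k G 0)" using blocks \<open>1 \<le> t\<close> by simp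
  with block_carrier obtain N where N: "N \<in> carrier_mat k k" and "N * block k G 0 = 1\<^sub>m k"
    and "block k G 0 * N = 1\<^sub>m k"
    by (rule invertible_matE)
  have "det N * det (block k G 0) = det (N * block k G 0)"
    by (rule det_mult[OF N block_carrier, symmetric])
  also have "\<dots> = 1" using \<open>N * block k G 0 = 1\<^sub>m k\<close> by simp
  finally have N_inv: "invertible_mat N" using invertible_mat_iff_det_neq_0[OF N] by auto
  define H where "H = N * G"
  have H: "H \<in> carrier_mat k (k + m)" unfolding H_def using N G tk by simp
  have H_blocks: "block k H j = N * block k G j" if "j < t" for j
    unfolding H_def by (rule block_mult[OF N G block_end_le[OF that]])
  define B where "B = reindex_cols H m ((+) k)"
  have B: "B \<in> carrier_mat k m" using H by (simp add: B_def reindex_cols_def)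
  have "block k H 0 = 1\<^sub>m k" using H_blocks[of 0] \<open>1 \<le> t\<close> \<open>N * block k G 0 = 1\<^sub>m k\<close> by simp
  then have HB: "H = hcat (1\<^sub>m k) B" using hcat_block_0_tail[OF H] by (simp add: B_def)
  have "invertible_mat (block k B j)" if "j < t - 1" for j
  proof -
    have "j * k + k \<le> m" using block_end_le[OF that, of k] by (simp add: m_def mult.commute)
    then have "block k B j = block k H (Suc j)"
      using B HB by (simp add: block_hcat_Suc)
    also have "\<dots> = N * block k G (Suc j)" using that by (intro H_blocks) simp
    finally show ?thesis
      using that N N_inv blocks[of "Suc j"] by (simp add: invertible_mat_mult[OF N block_carrier])
  qed
  then have "B \<in> GL_pow k (t - 1)" using B by (simp add: GL_pow_def m_def)
  moreover have "row_space G = row_space (hcat (1\<^sub>m k) B)"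
    using row_space_mult_invertible[OF N N_inv G] by (simp add: H_def[symmetric] HB)
  ultimately show ?thesis by (rule that)
qed

lemma CIS_code_equiv_systematic:
  assumes "1 \<le> t" and C: "CIS_code t k C"
  obtains B where "B \<in> GL_pow k (t - 1)" and "code_equiv (t * k) C (row_space (hcat (1\<^sub>m k) B))"
proof -
  obtain G where gen: "generator_matrix (t * k) k G C"
    using C unfolding CIS_code_def linear_code_def by blast
  obtain Is where info_all: "\<forall>j<t. information_set (t * k) k C (Is j)"
    and disj_all: "\<forall>i<t. \<forall>j<t. i \<noteq> j \<longrightarrow> Is i \<inter> Is j = {}"
    and cover: "(\<Union>j<t. Is j) = {..<t * k}"
    using C unfolding CIS_code_def by blast
  have info: "information_set (t * k) k C (Is j)" if "j < t" for j using info_all that by simp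
  have disj: "Is i \<inter> Is j = {}" if "i < t" "j < t" "i \<noteq> j" for i j using disj_all that by simp
  have G: "G \<in> carrier_mat k (t * k)" and CG: "C = row_space G"
    using gen unfolding generator_matrix_def by auto
  have indep: "cols_lin_indep G (Is j)" if j: "j < t" for j
  proof -
    obtain G' where gen': "generator_matrix (t * k) k G' C" and indep': "cols_lin_indep G' (Is j)"
      and sub: "Is j \<subseteq> {..<t * k}"
      using info[OF j] unfolding information_set_def by blast
    from gen' have G': "G' \<in> carrier_mat k (t * k)" and "row_space G' = row_space G"
      unfolding generator_matrix_def CG by auto
    then show ?thesis
      by (intro cols_lin_indep_row_space_mono[OF G G' _ sub indep']) simp
  qed
  have card: "card (Is j) = k" if "j < t" for j
    using info[OF that] unfolding information_set_def by (elim conjE)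
  obtain \<sigma> where \<sigma>: "\<sigma> permutes {..<t * k}"
    and bij: "\<And>j. j < t \<Longrightarrow> bij_betw (\<lambda>c. \<sigma> (j * k + c)) {..<k} (Is j)"
  proof (rule permutation_onto_partition[OF disj cover card])
    fix \<sigma> assume "\<sigma> permutes {..<t * k}"
      and "\<And>j. j < t \<Longrightarrow> bij_betw (\<lambda>c. \<sigma> (j * k + c)) {..<k} (Is j)"
    then show thesis by (rule that)
  qed
  define H where "H = reindex_cols G (t * k) \<sigma>"
  have H: "H \<in> carrier_mat k (t * k)" using G by (simp add: H_def reindex_cols_def)
  have "invertible_mat (block k H j)" if "j < t" for j
  proof -
    have block: "block k H j = reindex_cols G k (\<lambda>c. \<sigma> (j * k + c))"
      unfolding H_def using G block_end_le[OF that] by (simp add: block_reindex_cols)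
    have square: "reindex_cols G k (\<lambda>c. \<sigma> (j * k + c)) \<in> carrier_mat k k"
      using G by (simp add: reindex_cols_def)
    have "cols_lin_indep (reindex_cols G k (\<lambda>c. \<sigma> (j * k + c))) {..<k}"
      using cols_lin_indep_reindex_cols[OF bij[OF that]] indep[OF that] by simp
    then show ?thesis unfolding block invertible_mat_iff_cols_lin_indep[OF square] .
  qed
  with H \<open>1 \<le> t\<close> obtain B where B: "B \<in> GL_pow k (t - 1)"
    and HB: "row_space H = row_space (hcat (1\<^sub>m k) B)"
    by (rule systematic_generator_matrix)
  have "row_space H = permute_coords (t * k) \<sigma> ` C"
    unfolding CG using G
    by (intro row_space_permuted[OF G H permutes_id \<sigma>]) (simp add: H_def reindex_cols_def)
  then have "code_equiv (t * k) (row_space H) C" unfolding code_equiv_def using \<sigma> by blast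
  moreover have "C \<subseteq> carrier_vec (t * k)" using row_space_carrier[of G] G CG by simp
  ultimately have "code_equiv (t * k) C (row_space H)" by (rule code_equiv_sym)
  with B HB show ?thesis by (intro that) auto
qed

lemma exists_representatives:
  assumes refl: "\<And>x. x \<in> X \<Longrightarrow> R x x"
    and sym: "\<And>x y. x \<in> X \<Longrightarrow> y \<in> X \<Longrightarrow> R x y \<Longrightarrow> R y x"
    and trans: "\<And>x y z. x \<in> X \<Longrightarrow> y \<in> X \<Longrightarrow> z \<in> X \<Longrightarrow> R x y \<Longrightarrow> R y z \<Longrightarrow> R x z"
  obtains S where "S \<subseteq> X" and "\<And>x. x \<in> X \<Longrightarrow> \<exists>s\<in>S. R x s"
    and "\<And>s s'. s \<in> S \<Longrightarrow> s' \<in> S \<Longrightarrow> R s s' \<Longrightarrow> s = s'"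
proof -
  define rep where "rep x = (SOME y. y \<in> X \<and> R x y)" for x
  have rep: "rep x \<in> X" "R x (rep x)" if "x \<in> X" for x
  proof -
    have "\<exists>y. y \<in> X \<and> R x y" using that refl by blast
    then have "rep x \<in> X \<and> R x (rep x)" unfolding rep_def by (rule someI_ex)
    then show "rep x \<in> X" "R x (rep x)" by auto
  qed
  have rep_eq: "rep x = rep y" if x: "x \<in> X" and y: "y \<in> X" and "R x y" for x y
  proof -
    have "R x z \<longleftrightarrow> R y z" if z: "z \<in> X" for z
    proof
      assume "R x z"
      with trans[OF y x z sym[OF x y \<open>R x y\<close>]] show "R y z" .
    next
      assume "R y z"
      with trans[OF x y z \<open>R x y\<close>] show "R x z" .
    qed
    then have "(\<lambda>z. z \<in> X \<and> R x z) = (\<lambda>z. z \<in> X \<and> R y z)" by auto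
    then show ?thesis unfolding rep_def by simp
  qed
  show ?thesis
  proof
    show "rep ` X \<subseteq> X" using rep by blast
    show "\<exists>s\<in>rep ` X. R x s" if "x \<in> X" for x using rep[OF that] that by blast
    show "s = s'" if s: "s \<in> rep ` X" and s': "s' \<in> rep ` X" and "R s s'" for s s'
    proof -
      obtain x y where x: "x \<in> X" "s = rep x" and y: "y \<in> X" "s' = rep y" using s s' by blast
      have "R x (rep y)"
        using trans[OF x(1) rep(1)[OF x(1)] rep(1)[OF y(1)] rep(2)[OF x(1)]] \<open>R s s'\<close> x y
        by simp
      moreover have "R (rep y) y" using sym[OF y(1) rep(1)[OF y(1)] rep(2)[OF y(1)]] .
      ultimately have "R x y" by (rule trans[OF x(1) rep(1)[OF y(1)] y(1)])
      then show ?thesis using rep_eq x y by simp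
    qed
  qed
qed

theorem proposition9:
  fixes k t :: nat and Cat :: "bit mat set"
  assumes "k \<ge> 1" and "t \<ge> 2"
    and Cat_sub: "Cat \<subseteq> GL_pow k (t - 1)"
    and Cat_cover: "\<forall>A\<in>GL_pow k (t - 1). \<exists>B\<in>Cat. sim2 k (t - 1) A B"
    and Cat_distinct: "\<forall>B1\<in>Cat. \<forall>B2\<in>Cat. sim2 k (t - 1) B1 B2 \<longrightarrow> B1 = B2"
  defines "Sbar \<equiv> (\<lambda>B. row_space (hcat (1\<^sub>m k) B)) ` Cat"
  shows "(\<forall>C\<in>Sbar. CIS_code t k C)
       \<and> (\<forall>C. CIS_code t k C \<longrightarrow> (\<exists>D\<in>Sbar. code_equiv (t * k) C D))
       \<and> (\<exists>S\<subseteq>Sbar. (\<forall>C. CIS_code t k C \<longrightarrow> (\<exists>D\<in>S. code_equiv (t * k) C D))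
                  \<and> (\<forall>D1\<in>S. \<forall>D2\<in>S. code_equiv (t * k) D1 D2 \<longrightarrow> D1 = D2))"
proof -
  have t: "1 \<le> t" using \<open>t \<ge> 2\<close> by simp
  have length: "k + k * (t - 1) = t * k" using t by (cases t) auto
  have Cat_carrier: "B \<in> carrier_mat k (k * (t - 1))" if "B \<in> Cat" for B
    using Cat_sub that by (auto simp: GL_pow_def)
  have Sbar_carrier: "D \<subseteq> carrier_vec (t * k)" if D_Sbar: "D \<in> Sbar" for D
  proof -
    obtain B where B: "B \<in> Cat" and D: "D = row_space (hcat (1\<^sub>m k) B)"
      using D_Sbar unfolding Sbar_def by blast
    have "hcat (1\<^sub>m k) B \<in> carrier_mat k (t * k)"
      using hcat_carrier[OF one_carrier_mat Cat_carrier[OF B]] unfolding length .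
    then show ?thesis unfolding D using row_space_carrier[of "hcat (1\<^sub>m k) B"] by simp
  qed
  have CIS: "\<forall>C\<in>Sbar. CIS_code t k C"
    unfolding Sbar_def using CIS_code_systematic[OF t] Cat_sub by blast
  have equiv_Sbar: "\<exists>D\<in>Sbar. code_equiv (t * k) C D" if C: "CIS_code t k C" for C
  proof -
    obtain B where B: "B \<in> GL_pow k (t - 1)"
      and CB: "code_equiv (t * k) C (row_space (hcat (1\<^sub>m k) B))"
      by (rule CIS_code_equiv_systematic[OF t C])
    obtain B' P Q where B': "B' \<in> Cat" and P: "is_perm_mat k P" and Q: "is_perm_mat (k * (t - 1)) Q"
      and BPQ: "B = P * B' * Q"
      using Cat_cover B unfolding sim2_def by blast
    have "code_equiv (k + k * (t - 1)) (row_space (hcat (1\<^sub>m k) (P * B' * Q)))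
        (row_space (hcat (1\<^sub>m k) B'))"
      by (rule code_equiv_hcat_one_perm_mats[OF Cat_carrier[OF B'] P Q])
    then have "code_equiv (t * k) C (row_space (hcat (1\<^sub>m k) B'))"
      using code_equiv_trans[OF CB] unfolding length BPQ by blast
    moreover have "row_space (hcat (1\<^sub>m k) B') \<in> Sbar" unfolding Sbar_def using B' by blast
    ultimately show ?thesis by blast
  qed
  obtain S where S: "S \<subseteq> Sbar"
    and S_cover: "\<And>D. D \<in> Sbar \<Longrightarrow> \<exists>s\<in>S. code_equiv (t * k) D s"
    and S_distinct: "\<And>s s'. s \<in> S \<Longrightarrow> s' \<in> S \<Longrightarrow> code_equiv (t * k) s s' \<Longrightarrow> s = s'"
  proof (rule exists_representatives[of Sbar "code_equiv (t * k)"])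
    show "code_equiv (t * k) D D" if "D \<in> Sbar" for D
      using Sbar_carrier[OF that] by (rule code_equiv_refl)
    show "code_equiv (t * k) D' D" if "D \<in> Sbar" "D' \<in> Sbar" "code_equiv (t * k) D D'" for D D'
      using that(3) Sbar_carrier[OF that(2)] by (rule code_equiv_sym)
    show "code_equiv (t * k) D D''"
      if "D \<in> Sbar" "D' \<in> Sbar" "D'' \<in> Sbar" "code_equiv (t * k) D D'" "code_equiv (t * k) D' D''"
      for D D' D''
      using that(4,5) by (rule code_equiv_trans)
  qed (rule that)
  show ?thesis
  proof (intro conjI exI[of _ S])
    show "\<forall>C. CIS_code t k C \<longrightarrow> (\<exists>D\<in>Sbar. code_equiv (t * k) C D)" using equiv_Sbar by blast
    show "\<forall>C. CIS_code t k C \<longrightarrow> (\<exists>D\<in>S. code_equiv (t * k) C D)"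
    proof (intro allI impI)
      fix C assume "CIS_code t k C"
      then obtain D where D: "D \<in> Sbar" "code_equiv (t * k) C D" using equiv_Sbar by blast
      moreover obtain s where "s \<in> S" "code_equiv (t * k) D s" using S_cover[OF D(1)] by blast
      ultimately show "\<exists>D\<in>S. code_equiv (t * k) C D" using code_equiv_trans by blast
    qed
    show "\<forall>D1\<in>S. \<forall>D2\<in>S. code_equiv (t * k) D1 D2 \<longrightarrow> D1 = D2" using S_distinct by blast
  qed (use CIS S in simp_all)
qed

end
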